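(* Let $S=\mathbb{C}[w,x,y,z]$ with its standard grading, let $f\in S$ be homogeneous, let $J=(f_w,f_x,f_y,f_z)\subset S$ be its Jacobian ideal, and let $p_1,\dots,p_r\in\mathbb{C}^4\setminus\{0\}$ be points. Let $M\ge 1$ and let $D_1,\dots,D_M$ be linear functionals on $S$ of the form $D_j(h)=\sum_{\alpha\in A_j}c_{j,\alpha}\,(\partial^{\alpha}h)(p_{i(j)})$, where $i(j)\in\{1,\dots,r\}$, $A_j\subset\mathbb{Z}_{\ge0}^4$ is finite and $c_{j,\alpha}\in\mathbb{C}\setminus\{0\}$. Let $m_0$ be an integer and assume: (i) for every $m\ge m_0$ and every homogeneous $h\in S_m$, one has $h\in J$ if and only if $D_j(h)=0$ for all $j=1,\dots,M$; (ii) $\dim_{\mathbb{C}}(S/J)_m=M$ for every $m\ge m_0$. Let $L\in S$ be homogeneous of degree $e\ge 0$ such that $L(p_i)\neq 0$ for all $i$, and such that for every $j$, every $\alpha\in A_j$ and every multi-index $\beta\neq 0$ with $\beta\le\alpha$ componentwise, $(\partial^{\beta}L)(p_{i(j)})=0$. Then for every $m\ge m_0$, multiplication by $L$ induces a well-defined isomorphism $(S/J)_m\to(S/J)_{m+e}$; in particular, a homogeneous $h$ of degree $m\ge m_0$ with $h\notin J$ satisfies $hL\notin J$, and if the classes of $h_1,\dots,h_M\in S_m$ form a basis of $(S/J)_m$, then the classes of $Lh_1,\dots,Lh_M$ form a basis of $(S/J)_{m+e}$.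
   Context: For $\alpha=(\alpha_0,\alpha_1,\alpha_2,\alpha_3)\in\mathbb{Z}_{\ge0}^4$, $\partial^{\alpha}=\frac{\partial^{\alpha_0}}{\partial w^{\alpha_0}}\frac{\partial^{\alpha_1}}{\partial x^{\alpha_1}}\frac{\partial^{\alpha_2}}{\partial y^{\alpha_2}}\frac{\partial^{\alpha_3}}{\partial z^{\alpha_3}}$, and $(\partial^\alpha h)(p)$ denotes this derivative evaluated at the point $p$. $(S/J)_m$ denotes the degree-$m$ graded piece of the graded quotient ring $S/J$. In the intended application $f$ defines a surface in $\mathbb{P}^3$ with ADE singularities, $p_i$ are representatives of its singular points, $M$ is the global Milnor number (sum of Milnor numbers), $D_j$ are the differential operators characterizing the Jacobian ideal near the singular points, and $m_0=3(\deg f-2)$. *)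

theory Defs
  imports Complex_Main "HOL-Library.Poly_Mapping" "HOL-Library.Numeral_Type"
begin

text \<open>The four variables w,x,y,z are the four
  elements 0,1,2,3 of the numeral type 4. A monomial is an exponent vector
  (finitely supported map 4 to nat), a polynomial is a finitely supported coefficient map.\<close>

type_synonym mono4 = "4 \<Rightarrow>\<^sub>0 nat"
type_synonym poly4 = "mono4 \<Rightarrow>\<^sub>0 complex"

definition mdeg :: "mono4 \<Rightarrow> nat" where
  "mdeg a = (\<Sum>i\<in>UNIV. Poly_Mapping.lookup a i)"

definition homog :: "nat \<Rightarrow> poly4 \<Rightarrow> bool" where
  "homog m h \<longleftrightarrow> (\<forall>a\<in>Poly_Mapping.keys h. mdeg a = m)"

definition const4 :: "complex \<Rightarrow> poly4" where
  "const4 c = Poly_Mapping.single 0 c"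

definition eval4 :: "(4 \<Rightarrow> complex) \<Rightarrow> poly4 \<Rightarrow> complex" where
  "eval4 p h = (\<Sum>a\<in>Poly_Mapping.keys h. Poly_Mapping.lookup h a * (\<Prod>i\<in>UNIV. p i ^ Poly_Mapping.lookup a i))"

definition pd :: "4 \<Rightarrow> poly4 \<Rightarrow> poly4" where
  "pd i h = (\<Sum>a\<in>Poly_Mapping.keys h. Poly_Mapping.single (a - Poly_Mapping.single i 1)
                              (of_nat (Poly_Mapping.lookup a i) * Poly_Mapping.lookup h a))"

definition pdm :: "(4 \<Rightarrow> nat) \<Rightarrow> poly4 \<Rightarrow> poly4" where
  "pdm \<alpha> h = ((pd 0 ^^ \<alpha> 0) \<circ> (pd 1 ^^ \<alpha> 1) \<circ> (pd 2 ^^ \<alpha> 2) \<circ> (pd 3 ^^ \<alpha> 3)) h"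

definition jac_ideal :: "poly4 \<Rightarrow> poly4 set" where
  "jac_ideal f = {h. \<exists>g :: 4 \<Rightarrow> poly4. h = (\<Sum>i\<in>UNIV. g i * pd i f)}"

definition quot_basis :: "poly4 set \<Rightarrow> nat \<Rightarrow> nat \<Rightarrow> (nat \<Rightarrow> poly4) \<Rightarrow> bool" where
  "quot_basis J m n hs \<longleftrightarrow>
     (\<forall>j\<in>{1..n}. homog m (hs j)) \<and>
     (\<forall>c :: nat \<Rightarrow> complex. (\<Sum>j=1..n. const4 (c j) * hs j) \<in> J \<longrightarrow> (\<forall>j\<in>{1..n}. c j = 0)) \<and>
     (\<forall>h. homog m h \<longrightarrow> (\<exists>c :: nat \<Rightarrow> complex. h - (\<Sum>j=1..n. const4 (c j) * hs j) \<in> J))"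

definition quot_dim_eq :: "poly4 set \<Rightarrow> nat \<Rightarrow> nat \<Rightarrow> bool" where
  "quot_dim_eq J m n \<longleftrightarrow> (\<exists>hs. quot_basis J m n hs)"

end

theory Submission
  imports Defs Jordan_Normal_Form.Determinant
begin

text \<open>Every functional \<open>D\<^sub>j\<close> only sees derivatives \<open>\<partial>\<^sup>\<alpha>\<close> with \<open>\<alpha> \<in> A\<^sub>j\<close> at one point
  \<open>p\<close>, and by the Leibniz rule \<open>\<partial>\<^sup>\<alpha>(L h)(p) = \<Sum>\<^sub>\<beta>\<^sub>\<le>\<^sub>\<alpha> \<dots> \<partial>\<^sup>\<beta>L(p) \<partial>\<^sup>\<alpha>\<^sup>-\<^sup>\<beta>h(p)\<close>, in which
  all terms with \<open>\<beta> \<noteq> 0\<close> vanish by the hypothesis on \<open>L\<close>. Hence \<open>D\<^sub>j(L h) = L(p) D\<^sub>j(h)\<close>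
  with \<open>L(p) \<noteq> 0\<close>, so in degrees \<open>\<ge> m\<^sub>0\<close>, where the \<open>D\<^sub>j\<close> cut out \<open>J\<close>, multiplication by
  \<open>L\<close> preserves and reflects membership in \<open>J\<close>. It is therefore injective on
  \<open>(S/J)\<^sub>m\<close>, and since \<open>(S/J)\<^sub>m\<close> and \<open>(S/J)\<^sub>m\<^sub>+\<^sub>e\<close> have the same dimension \<open>M\<close>, bijective.\<close>

lemma lookup_minus_mono4:
  "Poly_Mapping.lookup (a - b) k = Poly_Mapping.lookup a k - Poly_Mapping.lookup (b::mono4) k"
  by transfer simp

lemma poly4_sum_single:
  "(h::poly4) = (\<Sum>a\<in>Poly_Mapping.keys h. Poly_Mapping.single a (Poly_Mapping.lookup h a))"
  by (rule poly_mapping_eqI)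
     (simp add: lookup_sum lookup_single when_def in_keys_iff split: if_splits)

definition eval_mono :: "(4 \<Rightarrow> complex) \<Rightarrow> mono4 \<Rightarrow> complex" where
  "eval_mono p a = (\<Prod>i\<in>UNIV. p i ^ Poly_Mapping.lookup a i)"

lemma eval_mono_add: "eval_mono p (a + b) = eval_mono p a * eval_mono p b"
  by (simp add: eval_mono_def lookup_add power_add prod.distrib)

lemma eval4_single: "eval4 p (Poly_Mapping.single a c) = c * eval_mono p a"
  by (simp add: eval4_def eval_mono_def)

lemma eval4_add: "eval4 p (f + g) = eval4 p f + eval4 p g"
  unfolding eval4_def by (rule setsum_keys_plus_distrib) (auto simp: distrib_right)

lemma eval4_zero [simp]: "eval4 p 0 = 0"
  by (simp add: eval4_def)

lemma eval4_sum: "eval4 p (\<Sum>x\<in>X. g x) = (\<Sum>x\<in>X. eval4 p (g x))"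
  by (induction X rule: infinite_finite_induct) (auto simp: eval4_add)

lemma eval4_diff: "eval4 p (f - g) = eval4 p f - eval4 p g"
  using eval4_add[of p "f - g" g] by simp

lemma eval4_mult: "eval4 p (f * g) = eval4 p f * eval4 p g"
proof -
  let ?f = "Poly_Mapping.lookup f" and ?g = "Poly_Mapping.lookup g"
  have "f * g = (\<Sum>a\<in>Poly_Mapping.keys f. \<Sum>b\<in>Poly_Mapping.keys g. Poly_Mapping.single (a + b) (?f a * ?g b))"
    by (subst (1 2) poly4_sum_single) (simp add: sum_product mult_single)
  then have "eval4 p (f * g) = (\<Sum>a\<in>Poly_Mapping.keys f. \<Sum>b\<in>Poly_Mapping.keys g. ?f a * ?g b * eval_mono p (a + b))"
    by (simp add: eval4_sum eval4_single)
  also have "\<dots> = (\<Sum>a\<in>Poly_Mapping.keys f. ?f a * eval_mono p a) * (\<Sum>b\<in>Poly_Mapping.keys g. ?g b * eval_mono p b)"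
    by (simp add: sum_product eval_mono_add mult_ac)
  finally show ?thesis by (simp add: eval4_def eval_mono_def)
qed

lemma eval4_const: "eval4 p (const4 c) = c"
  by (simp add: const4_def eval4_single eval_mono_def)

lemma eval4_of_nat: "eval4 p (of_nat n) = of_nat n"
  by (simp add: single_of_nat[symmetric] eval4_single eval_mono_def del: single_of_nat)

subsection \<open>Partial derivatives\<close>

lemma derivation_funpow_leibniz:
  fixes \<delta> :: "'a::comm_ring_1 \<Rightarrow> 'a"
  assumes add: "\<And>x y. \<delta> (x + y) = \<delta> x + \<delta> y"
    and mult: "\<And>x y. \<delta> (x * y) = \<delta> x * y + x * \<delta> y"
  shows "(\<delta> ^^ n) (a * b) = (\<Sum>k\<le>n. of_nat (n choose k) * ((\<delta> ^^ k) a * (\<delta> ^^ (n - k)) b))"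
proof (induction n)
  case 0
  then show ?case by simp
next
  case (Suc n)
  have zero: "\<delta> 0 = 0"
    using add[of 0 0] by simp
  have sum: "\<delta> (\<Sum>x\<in>X. g x) = (\<Sum>x\<in>X. \<delta> (g x))" for X :: "nat set" and g
    by (induction X rule: infinite_finite_induct) (auto simp: add zero)
  have of_nat_mult: "\<delta> (of_nat N * x) = of_nat N * \<delta> x" for N x
    by (induction N) (simp_all add: zero add distrib_right)
  define A where "A k = (\<delta> ^^ k) a" for k
  define B where "B k = (\<delta> ^^ k) b" for k
  have "(\<delta> ^^ Suc n) (a * b) = \<delta> (\<Sum>k\<le>n. of_nat (n choose k) * (A k * B (n - k)))"
    using Suc by (simp add: A_def B_def)
  also have "\<dots> = (\<Sum>k\<le>n. of_nat (n choose k) * (A (Suc k) * B (n - k)))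
                 + (\<Sum>k\<le>n. of_nat (n choose k) * (A k * B (Suc n - k)))"
    by (simp only: sum of_nat_mult)
       (simp add: mult A_def B_def distrib_left sum.distrib Suc_diff_le)
  also have "(\<Sum>k\<le>n. of_nat (n choose k) * (A k * B (Suc n - k)))
           = A 0 * B (Suc n) + (\<Sum>k\<le>n. of_nat (n choose Suc k) * (A (Suc k) * B (n - k)))"
    using sum.atMost_Suc_shift[of "\<lambda>k. of_nat (n choose k) * (A k * B (Suc n - k))" n]
    by (simp add: binomial_eq_0)
  finally have "(\<delta> ^^ Suc n) (a * b)
      = A 0 * B (Suc n) + (\<Sum>k\<le>n. of_nat (Suc n choose Suc k) * (A (Suc k) * B (n - k)))"
    by (simp add: sum.distrib[symmetric] algebra_simps)
  also have "\<dots> = (\<Sum>k\<le>Suc n. of_nat (Suc n choose k) * (A k * B (Suc n - k)))"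
    by (subst sum.atMost_Suc_shift) simp
  finally show ?case
    by (simp add: A_def B_def)
qed

lemma pd_single:
  "pd i (Poly_Mapping.single a c)
   = Poly_Mapping.single (a - Poly_Mapping.single i 1) (of_nat (Poly_Mapping.lookup a i) * c)"
  by (simp add: pd_def)

lemma pd_add: "pd i (f + g) = pd i f + pd i g"
  unfolding pd_def by (rule setsum_keys_plus_distrib) (auto simp: distrib_left single_add)

lemma pd_zero [simp]: "pd i 0 = 0"
  by (simp add: pd_def)

lemma pd_sum: "pd i (\<Sum>x\<in>X. g x) = (\<Sum>x\<in>X. pd i (g x))"
  by (induction X rule: infinite_finite_induct) (auto simp: pd_add)

lemma pd_mult_single:
  "pd i (Poly_Mapping.single a c * Poly_Mapping.single b d)
   = pd i (Poly_Mapping.single a c) * Poly_Mapping.single b d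
     + Poly_Mapping.single a c * pd i (Poly_Mapping.single b d)"
proof -
  let ?e = "Poly_Mapping.single i (Suc 0)"
  have shift: "Poly_Mapping.lookup x i > 0 \<Longrightarrow> x - ?e + y = x + y - ?e" for x y :: mono4
    by (rule poly_mapping_eqI) (auto simp: lookup_minus_mono4 lookup_add lookup_single when_def)
  have left: "pd i (Poly_Mapping.single a c) * Poly_Mapping.single b d
      = Poly_Mapping.single (a + b - ?e) (of_nat (Poly_Mapping.lookup a i) * c * d)"
    by (cases "Poly_Mapping.lookup a i = 0") (simp_all add: pd_single mult_single shift)
  have right: "Poly_Mapping.single a c * pd i (Poly_Mapping.single b d)
      = Poly_Mapping.single (a + b - ?e) (of_nat (Poly_Mapping.lookup b i) * c * d)"
    using shift[of b a]
    by (cases "Poly_Mapping.lookup b i = 0") (simp_all add: pd_single mult_single add.commute mult_ac)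
  show ?thesis
    unfolding left right
    by (simp add: mult_single pd_single lookup_add algebra_simps flip: single_add)
qed

lemma pd_mult: "pd i (f * g) = pd i f * g + f * pd i g"
proof -
  let ?f = "\<lambda>a. Poly_Mapping.single a (Poly_Mapping.lookup f a)"
  let ?g = "\<lambda>b. Poly_Mapping.single b (Poly_Mapping.lookup g b)"
  have "pd i (f * g) = pd i ((\<Sum>a\<in>Poly_Mapping.keys f. ?f a) * (\<Sum>b\<in>Poly_Mapping.keys g. ?g b))"
    by (subst (1 2) poly4_sum_single) simp
  also have "\<dots> = pd i (\<Sum>a\<in>Poly_Mapping.keys f. ?f a) * (\<Sum>b\<in>Poly_Mapping.keys g. ?g b)
                + (\<Sum>a\<in>Poly_Mapping.keys f. ?f a) * pd i (\<Sum>b\<in>Poly_Mapping.keys g. ?g b)"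
    by (simp add: sum_product pd_sum pd_mult_single sum.distrib)
  finally show ?thesis
    by (simp flip: poly4_sum_single)
qed

lemma pd_const_mult: "pd i (const4 c * f) = const4 c * pd i f"
  by (simp add: pd_mult const4_def pd_single)

lemma pd_pow_add: "(pd i ^^ n) (x + y) = (pd i ^^ n) x + (pd i ^^ n) y"
  by (induction n) (auto simp: pd_add)

lemma pd_pow_zero: "(pd i ^^ n) 0 = 0"
  by (induction n) auto

lemma pd_pow_sum: "(pd i ^^ n) (\<Sum>x\<in>X. g x) = (\<Sum>x\<in>X. (pd i ^^ n) (g x))"
  by (induction X rule: infinite_finite_induct) (auto simp: pd_pow_add pd_pow_zero)

lemma pd_pow_const_mult: "(pd i ^^ n) (const4 c * x) = const4 c * (pd i ^^ n) x"
  by (induction n) (auto simp: pd_const_mult)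

lemma pd_pow_of_nat_mult: "(pd i ^^ n) (of_nat N * x) = of_nat N * (pd i ^^ n) x"
  using pd_pow_const_mult[of n i "of_nat N" x]
  by (simp add: const4_def single_of_nat[symmetric] del: single_of_nat)

lemma pd_pow_mult: "(pd i ^^ n) (a * b) = (\<Sum>k\<le>n. of_nat (n choose k) * ((pd i ^^ k) a * (pd i ^^ (n - k)) b))"
  by (rule derivation_funpow_leibniz[OF pd_add pd_mult])

lemma pd_pow_sum_mult:
  "(pd i ^^ n) (\<Sum>k\<in>K. of_nat (c k) * (u k * v k))
   = (\<Sum>k\<in>K. \<Sum>j\<le>n. of_nat (c k * (n choose j)) * ((pd i ^^ j) (u k) * (pd i ^^ (n - j)) (v k)))"
  by (simp only: pd_pow_sum, simp only: pd_pow_of_nat_mult, simp only: pd_pow_mult)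
     (simp add: sum_distrib_left mult.assoc)

lemma pdm_mult:
  "pdm \<alpha> (L * h) = (\<Sum>k3\<le>\<alpha> 3. \<Sum>k2\<le>\<alpha> 2. \<Sum>k1\<le>\<alpha> 1. \<Sum>k0\<le>\<alpha> 0.
     of_nat ((\<alpha> 3 choose k3) * (\<alpha> 2 choose k2) * (\<alpha> 1 choose k1) * (\<alpha> 0 choose k0)) *
     ((pd 0 ^^ k0) ((pd 1 ^^ k1) ((pd 2 ^^ k2) ((pd 3 ^^ k3) L))) *
      (pd 0 ^^ (\<alpha> 0 - k0)) ((pd 1 ^^ (\<alpha> 1 - k1)) ((pd 2 ^^ (\<alpha> 2 - k2)) ((pd 3 ^^ (\<alpha> 3 - k3)) h)))))"
  unfolding pdm_def comp_def pd_pow_mult[of "\<alpha> 3" 3 L h]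
  by (simp only: pd_pow_sum_mult pd_pow_sum)

lemma eval4_pdm_mult_flat:
  assumes flat: "\<And>\<beta>. (\<exists>k. \<beta> k \<noteq> 0) \<Longrightarrow> (\<forall>k. \<beta> k \<le> \<alpha> k) \<Longrightarrow> eval4 q (pdm \<beta> L) = 0"
  shows "eval4 q (pdm \<alpha> (L * h)) = eval4 q L * eval4 q (pdm \<alpha> h)"
proof -
  let ?X = "eval4 q L * eval4 q (pdm \<alpha> h)"
  let ?T = "\<lambda>k3 k2 k1 k0. of_nat ((\<alpha> 3 choose k3) * (\<alpha> 2 choose k2) * (\<alpha> 1 choose k1) * (\<alpha> 0 choose k0)) *
     ((pd 0 ^^ k0) ((pd 1 ^^ k1) ((pd 2 ^^ k2) ((pd 3 ^^ k3) L))) *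
      (pd 0 ^^ (\<alpha> 0 - k0)) ((pd 1 ^^ (\<alpha> 1 - k1)) ((pd 2 ^^ (\<alpha> 2 - k2)) ((pd 3 ^^ (\<alpha> 3 - k3)) h))))"
  have summand: "eval4 q (?T k3 k2 k1 k0) = (if k0 = 0 then if k1 = 0 then if k2 = 0 then if k3 = 0 then ?X else 0 else 0 else 0 else 0)"
    if "k3 \<le> \<alpha> 3" "k2 \<le> \<alpha> 2" "k1 \<le> \<alpha> 1" "k0 \<le> \<alpha> 0" for k3 k2 k1 k0
  proof (cases "k0 = 0 \<and> k1 = 0 \<and> k2 = 0 \<and> k3 = 0")
    case True
    then show ?thesis by (simp add: eval4_mult eval4_of_nat pdm_def)
  next
    case False
    define \<beta> :: "4 \<Rightarrow> nat" where
      "\<beta> i = (if i = 0 then k0 else if i = 1 then k1 else if i = 2 then k2 else if i = 3 then k3 else 0)" for i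
    have \<beta>: "\<beta> 0 = k0" "\<beta> 1 = k1" "\<beta> 2 = k2" "\<beta> 3 = k3"
      by (simp_all add: \<beta>_def)
    have "\<forall>k. \<beta> k \<le> \<alpha> k"
      using that by (auto simp: \<beta>_def)
    moreover have "\<exists>k. \<beta> k \<noteq> 0"
      using False \<beta> by metis
    ultimately have "eval4 q (pdm \<beta> L) = 0"
      using flat by blast
    then show ?thesis
      using False by (auto simp: pdm_def \<beta> eval4_mult)
  qed
  have "eval4 q (pdm \<alpha> (L * h)) = (\<Sum>k3\<le>\<alpha> 3. \<Sum>k2\<le>\<alpha> 2. \<Sum>k1\<le>\<alpha> 1. \<Sum>k0\<le>\<alpha> 0. eval4 q (?T k3 k2 k1 k0))"
    unfolding pdm_mult by (simp add: eval4_sum)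
  also have "\<dots> = (\<Sum>k3\<le>\<alpha> 3. \<Sum>k2\<le>\<alpha> 2. \<Sum>k1\<le>\<alpha> 1. \<Sum>k0\<le>\<alpha> 0.
                    if k0 = 0 then if k1 = 0 then if k2 = 0 then if k3 = 0 then ?X else 0 else 0 else 0 else 0)"
    by (intro sum.cong refl summand) auto
  also have "\<dots> = ?X"
    by simp
  finally show ?thesis .
qed

lemma pdm_add: "pdm \<alpha> (x + y) = pdm \<alpha> x + pdm \<alpha> y"
  by (simp add: pdm_def pd_pow_add)

lemma pdm_diff: "pdm \<alpha> (x - y) = pdm \<alpha> x - pdm \<alpha> y"
  using pdm_add[of \<alpha> "x - y" y] by (simp add: eq_diff_eq)

lemma pdm_sum: "pdm \<alpha> (\<Sum>k\<in>K. g k) = (\<Sum>k\<in>K. pdm \<alpha> (g k))"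
  by (simp add: pdm_def pd_pow_sum)

lemma pdm_const_mult: "pdm \<alpha> (const4 c * x) = const4 c * pdm \<alpha> x"
  by (simp add: pdm_def pd_pow_const_mult)

subsection \<open>Differential functionals at a point\<close>

definition diff_functional ::
    "(4 \<Rightarrow> complex) \<Rightarrow> (4 \<Rightarrow> nat) set \<Rightarrow> ((4 \<Rightarrow> nat) \<Rightarrow> complex) \<Rightarrow> poly4 \<Rightarrow> complex" where
  "diff_functional q A c h = (\<Sum>\<alpha>\<in>A. c \<alpha> * eval4 q (pdm \<alpha> h))"

lemma diff_functional_lincomb:
  "diff_functional q A c (\<Sum>k\<in>K. const4 (a k) * g k) = (\<Sum>k\<in>K. a k * diff_functional q A c (g k))"
  unfolding diff_functional_def
  by (simp add: pdm_sum pdm_const_mult eval4_sum eval4_mult eval4_const)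
     (simp add: sum_distrib_left mult_ac sum.swap[of _ A])

lemma diff_functional_diff:
  "diff_functional q A c (x - y) = diff_functional q A c x - diff_functional q A c y"
  by (simp add: diff_functional_def pdm_diff eval4_diff sum_subtractf right_diff_distrib)

lemma diff_functional_mult_flat:
  assumes flat: "\<And>\<alpha> \<beta>. \<alpha> \<in> A \<Longrightarrow> (\<exists>k. \<beta> k \<noteq> 0) \<Longrightarrow> (\<forall>k. \<beta> k \<le> \<alpha> k) \<Longrightarrow> eval4 q (pdm \<beta> L) = 0"
  shows "diff_functional q A c (L * h) = eval4 q L * diff_functional q A c h"
proof -
  have "eval4 q (pdm \<alpha> (L * h)) = eval4 q L * eval4 q (pdm \<alpha> h)" if "\<alpha> \<in> A" for \<alpha>
    using flat[OF that] by (rule eval4_pdm_mult_flat)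
  then show ?thesis
    unfolding diff_functional_def sum_distrib_left by (auto intro!: sum.cong simp: mult_ac)
qed

lemma mdeg_add: "mdeg (a + b) = mdeg a + mdeg b"
  by (simp add: mdeg_def lookup_add sum.distrib)

lemma homog_mult: "homog e L \<Longrightarrow> homog m h \<Longrightarrow> homog (m + e) (L * h)"
  unfolding homog_def using keys_mult[of L h] by (fastforce simp: mdeg_add)

lemma homog_add: "homog m x \<Longrightarrow> homog m y \<Longrightarrow> homog m (x + y)"
  unfolding homog_def using keys_add[of x y] by blast

lemma homog_diff: "homog m x \<Longrightarrow> homog m y \<Longrightarrow> homog m (x - y)"
  unfolding homog_def using keys_add[of x "- y"] by (auto simp: in_keys_iff)

lemma homog_const_mult: "homog m x \<Longrightarrow> homog m (const4 c * x)"
  using homog_mult[of 0 "const4 c" m x] by (simp add: homog_def const4_def mdeg_def)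

lemma homog_sum: "(\<And>k. k \<in> K \<Longrightarrow> homog m (g k)) \<Longrightarrow> homog m (\<Sum>k\<in>K. g k)"
  by (induction K rule: infinite_finite_induct) (simp_all add: homog_add homog_def[of m 0])

subsection \<open>Multiplication between graded pieces cut out by functionals\<close>

lemma injective_square_system_solvable:
  fixes w :: "nat \<Rightarrow> nat \<Rightarrow> 'a::field"
  assumes indep: "\<forall>c. (\<forall>j\<in>{1..M}. (\<Sum>k=1..M. c k * w k j) = 0) \<longrightarrow> (\<forall>k\<in>{1..M}. c k = 0)"
  shows "\<exists>c. \<forall>j\<in>{1..M}. (\<Sum>k=1..M. c k * w k j) = b j"
proof -
  have shift: "(\<Sum>k=1..M. f k) = (\<Sum>k<M. f (Suc k))" for f :: "nat \<Rightarrow> 'a"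
    by (induction M) auto
  define W where "W = mat M M (\<lambda>(j, k). w (Suc k) (Suc j))"
  have W: "W \<in> carrier_mat M M"
    by (simp add: W_def)
  have system: "(\<Sum>k=1..M. c k * w k j) = (W *\<^sub>v v) $ (j - 1)"
    if j: "j \<in> {1..M}" and v: "v \<in> carrier_vec M" "\<And>k. k < M \<Longrightarrow> v $ k = c (Suc k)" for c v j
  proof -
    have "(\<Sum>k=1..M. c k * w k j) = (\<Sum>k<M. v $ k * w (Suc k) (Suc (j - 1)))"
      unfolding shift using j v by (auto intro!: sum.cong)
    also have "\<dots> = (W *\<^sub>v v) $ (j - 1)"
      using j v by (auto simp: W_def scalar_prod_def mult.commute lessThan_atLeast0 intro!: sum.cong)
    finally show ?thesis .
  qed
  have "det W \<noteq> 0"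
  proof
    assume "det W = 0"
    then obtain v where v: "v \<in> carrier_vec M" "v \<noteq> 0\<^sub>v M" "W *\<^sub>v v = 0\<^sub>v M"
      using det_0_iff_vec_prod_zero_field[OF W] by blast
    have "\<forall>j\<in>{1..M}. (\<Sum>k=1..M. v $ (k - 1) * w k j) = 0"
      using system[of _ v "\<lambda>k. v $ (k - 1)"] v by auto
    then have "\<forall>k\<in>{1..M}. v $ (k - 1) = 0"
      using indep[rule_format, of "\<lambda>k. v $ (k - 1)"] by blast
    then have "v $ i = 0" if "i < M" for i
      using that by (drule_tac bspec[of _ _ "Suc i"]) auto
    then have "v = 0\<^sub>v M"
      using v(1) by (intro eq_vecI) auto
    with v(2) show False
      by simp
  qed
  then obtain V where V: "V \<in> carrier_mat M M" and WV: "W * V = 1\<^sub>m M"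
    using det_non_zero_imp_unit[OF W] unfolding Units_def ring_mat_def by auto
  define x where "x = V *\<^sub>v vec M (\<lambda>j. b (Suc j))"
  have x: "x \<in> carrier_vec M"
    using V by (simp add: x_def)
  have "W *\<^sub>v x = vec M (\<lambda>j. b (Suc j))"
    using W V WV by (simp add: x_def assoc_mult_mat_vec[symmetric])
  then have "\<forall>j\<in>{1..M}. (\<Sum>k=1..M. x $ (k - 1) * w k j) = b j"
    using system[of _ x "\<lambda>k. x $ (k - 1)"] x by auto
  then show ?thesis
    by (rule exI[of _ "\<lambda>k. x $ (k - 1)"])
qed

locale multiplier_scales_functionals =
  fixes J :: "poly4 set" and D :: "nat \<Rightarrow> poly4 \<Rightarrow> complex" and M m e :: nat
    and L :: poly4 and s :: "nat \<Rightarrow> complex"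
  assumes membership: "\<And>n h. n \<in> {m, m + e} \<Longrightarrow> homog n h \<Longrightarrow> h \<in> J \<longleftrightarrow> (\<forall>j\<in>{1..M}. D j h = 0)"
    and D_lincomb: "\<And>j (K :: nat set) a g. j \<in> {1..M} \<Longrightarrow>
        D j (\<Sum>k\<in>K. const4 (a k) * g k) = (\<Sum>k\<in>K. a k * D j (g k))"
    and D_diff: "\<And>j x y. j \<in> {1..M} \<Longrightarrow> D j (x - y) = D j x - D j y"
    and D_mult: "\<And>j h. j \<in> {1..M} \<Longrightarrow> D j (L * h) = s j * D j h"
    and scale_nonzero: "\<And>j. j \<in> {1..M} \<Longrightarrow> s j \<noteq> 0"
    and L_homog: "homog e L"
begin

lemma mult_mem_iff:
  assumes "homog m h"
  shows "L * h \<in> J \<longleftrightarrow> h \<in> J"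
proof -
  have "L * h \<in> J \<longleftrightarrow> (\<forall>j\<in>{1..M}. s j * D j h = 0)"
    using membership[of "m + e"] homog_mult[OF L_homog assms] D_mult by simp
  also have "\<dots> \<longleftrightarrow> h \<in> J"
    using membership[of m] assms scale_nonzero by simp
  finally show ?thesis .
qed

lemma quot_basis_mult:
  assumes basis: "quot_basis J m M hs"
  shows "quot_basis J (m + e) M (\<lambda>j. L * hs j)"
proof -
  let ?comb = "\<lambda>a. \<Sum>k=1..M. const4 (a k) * (L * hs k)"
  have hs_homog: "\<forall>j\<in>{1..M}. homog m (hs j)"
    and hs_indep: "\<forall>a. (\<Sum>k=1..M. const4 (a k) * hs k) \<in> J \<longrightarrow> (\<forall>k\<in>{1..M}. a k = 0)"
    using basis unfolding quot_basis_def by blast+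
  have Lhs_homog: "\<forall>j\<in>{1..M}. homog (m + e) (L * hs j)"
    using hs_homog homog_mult[OF L_homog] by blast
  have comb_homog: "homog (m + e) (?comb a)" for a
    using Lhs_homog by (intro homog_sum homog_const_mult) auto
  have indep: "\<forall>k\<in>{1..M}. a k = 0" if "?comb a \<in> J" for a
  proof -
    have "?comb a = L * (\<Sum>k=1..M. const4 (a k) * hs k)"
      by (simp add: sum_distrib_left mult_ac)
    moreover have "homog m (\<Sum>k=1..M. const4 (a k) * hs k)"
      using hs_homog by (intro homog_sum homog_const_mult) auto
    ultimately show ?thesis
      using that mult_mem_iff hs_indep by metis
  qed
  have span: "\<exists>a. g - ?comb a \<in> J" if g: "homog (m + e) g" for g
  proof -
    have "\<forall>k\<in>{1..M}. a k = 0" if "\<forall>j\<in>{1..M}. (\<Sum>k=1..M. a k * D j (L * hs k)) = 0" for a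
    proof -
      have "D j (?comb a) = 0" if j: "j \<in> {1..M}" for j
      proof -
        have "D j (?comb a) = (\<Sum>k=1..M. a k * D j (L * hs k))"
          by (rule D_lincomb[OF j])
        also have "\<dots> = 0"
          using j \<open>\<forall>j\<in>{1..M}. _ = 0\<close> by blast
        finally show ?thesis .
      qed
      then show ?thesis
        using membership[of "m + e"] comb_homog indep by auto
    qed
    then obtain a where "\<forall>j\<in>{1..M}. (\<Sum>k=1..M. a k * D j (L * hs k)) = D j g"
      using injective_square_system_solvable[of M "\<lambda>k j. D j (L * hs k)" "\<lambda>j. D j g"] by blast
    then have "\<forall>j\<in>{1..M}. D j (g - ?comb a) = 0"
      by (simp add: D_diff D_lincomb)
    then show ?thesis
      using membership[of "m + e"] homog_diff[OF g comb_homog] by blast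
  qed
  show ?thesis
    unfolding quot_basis_def using Lhs_homog indep span by blast
qed

lemma mult_surj_mod:
  assumes basis: "quot_basis J m M hs" and g: "homog (m + e) g"
  shows "\<exists>h. homog m h \<and> g - L * h \<in> J"
proof -
  obtain a where "g - (\<Sum>k=1..M. const4 (a k) * (L * hs k)) \<in> J"
    using quot_basis_mult[OF basis] g unfolding quot_basis_def by blast
  moreover have "(\<Sum>k=1..M. const4 (a k) * (L * hs k)) = L * (\<Sum>k=1..M. const4 (a k) * hs k)"
    by (simp add: sum_distrib_left mult_ac)
  moreover have "homog m (\<Sum>k=1..M. const4 (a k) * hs k)"
    using basis unfolding quot_basis_def by (intro homog_sum homog_const_mult) auto
  ultimately show ?thesis
    by metis
qed

end

lemma multiplier_scales_diff_functionals:
  assumes membership: "\<And>n h. n \<in> {m, m + e} \<Longrightarrow> homog n h \<Longrightarrow> h \<in> J \<longleftrightarrow> (\<forall>j\<in>{1..M}. D j h = 0)"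
    and D_eq: "\<And>j h. j \<in> {1..M} \<Longrightarrow> D j h = diff_functional (q j) (A j) (c j) h"
    and flat: "\<And>j \<alpha> \<beta>. j \<in> {1..M} \<Longrightarrow> \<alpha> \<in> A j \<Longrightarrow> (\<exists>k. \<beta> k \<noteq> 0) \<Longrightarrow> (\<forall>k. \<beta> k \<le> \<alpha> k) \<Longrightarrow>
        eval4 (q j) (pdm \<beta> L) = 0"
    and nonvanishing: "\<And>j. j \<in> {1..M} \<Longrightarrow> eval4 (q j) L \<noteq> 0"
    and "homog e L"
  shows "multiplier_scales_functionals J D M m e L (\<lambda>j. eval4 (q j) L)"
proof
  show "D j (L * h) = eval4 (q j) L * D j h" if j: "j \<in> {1..M}" for j h
    using diff_functional_mult_flat[OF flat[OF j]] j by (simp add: D_eq)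
qed (simp_all add: assms D_eq diff_functional_lincomb diff_functional_diff)

theorem theorem3p7:
  fixes f L :: poly4
    and d e r M :: nat
    and m0 :: int
    and p :: "nat \<Rightarrow> 4 \<Rightarrow> complex"
    and idx :: "nat \<Rightarrow> nat"
    and A :: "nat \<Rightarrow> (4 \<Rightarrow> nat) set"
    and c :: "nat \<Rightarrow> (4 \<Rightarrow> nat) \<Rightarrow> complex"
    and D :: "nat \<Rightarrow> poly4 \<Rightarrow> complex"
  assumes f_homog: "homog d f"
    and pts: "\<forall>i\<in>{1..r}. (\<exists>k. p i k \<noteq> 0)"
    and M_pos: "M \<ge> 1"
    and idx_range: "\<forall>j\<in>{1..M}. idx j \<in> {1..r}"
    and A_fin: "\<forall>j\<in>{1..M}. finite (A j)"
    and c_nz: "\<forall>j\<in>{1..M}. \<forall>\<alpha>\<in>A j. c j \<alpha> \<noteq> 0"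
    and D_def: "\<forall>j\<in>{1..M}. \<forall>h. D j h = (\<Sum>\<alpha>\<in>A j. c j \<alpha> * eval4 (p (idx j)) (pdm \<alpha> h))"
    and hyp_i: "\<forall>m::nat. int m \<ge> m0 \<longrightarrow> (\<forall>h. homog m h \<longrightarrow>
                   (h \<in> jac_ideal f \<longleftrightarrow> (\<forall>j\<in>{1..M}. D j h = 0)))"
    and hyp_ii: "\<forall>m::nat. int m \<ge> m0 \<longrightarrow> quot_dim_eq (jac_ideal f) m M"
    and L_homog: "homog e L"
    and L_nonvan: "\<forall>i\<in>{1..r}. eval4 (p i) L \<noteq> 0"
    and L_deriv: "\<forall>j\<in>{1..M}. \<forall>\<alpha>\<in>A j. \<forall>\<beta>. (\<exists>k. \<beta> k \<noteq> 0) \<and> (\<forall>k. \<beta> k \<le> \<alpha> k)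
                     \<longrightarrow> eval4 (p (idx j)) (pdm \<beta> L) = 0"
  shows "\<forall>m::nat. int m \<ge> m0 \<longrightarrow>
           (\<forall>h. homog m h \<longrightarrow> homog (m + e) (L * h))
         \<and> (\<forall>h. homog m h \<and> h \<in> jac_ideal f \<longrightarrow> L * h \<in> jac_ideal f)
         \<and> (\<forall>h. homog m h \<and> L * h \<in> jac_ideal f \<longrightarrow> h \<in> jac_ideal f)
         \<and> (\<forall>g. homog (m + e) g \<longrightarrow> (\<exists>h. homog m h \<and> g - L * h \<in> jac_ideal f))
         \<and> (\<forall>h. homog m h \<and> h \<notin> jac_ideal f \<longrightarrow> h * L \<notin> jac_ideal f)
         \<and> (\<forall>hs. quot_basis (jac_ideal f) m M hs \<longrightarrow>
                   quot_basis (jac_ideal f) (m + e) M (\<lambda>j. L * hs j))"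
proof (intro allI impI)
  fix m :: nat
  assume m: "int m \<ge> m0"
  interpret multiplier_scales_functionals "jac_ideal f" D M m e L "\<lambda>j. eval4 (p (idx j)) L"
  proof (rule multiplier_scales_diff_functionals[where A = A and c = c])
    show "h \<in> jac_ideal f \<longleftrightarrow> (\<forall>j\<in>{1..M}. D j h = 0)" if "n \<in> {m, m + e}" "homog n h" for n h
      using hyp_i[rule_format, OF _ that(2)] m that(1) by auto
  qed (use D_def L_deriv L_nonvan idx_range L_homog in \<open>unfold diff_functional_def, blast+\<close>)
  obtain hs where basis: "quot_basis (jac_ideal f) m M hs"
    using hyp_ii m unfolding quot_dim_eq_def by blast
  show "(\<forall>h. homog m h \<longrightarrow> homog (m + e) (L * h))
         \<and> (\<forall>h. homog m h \<and> h \<in> jac_ideal f \<longrightarrow> L * h \<in> jac_ideal f)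
         \<and> (\<forall>h. homog m h \<and> L * h \<in> jac_ideal f \<longrightarrow> h \<in> jac_ideal f)
         \<and> (\<forall>g. homog (m + e) g \<longrightarrow> (\<exists>h. homog m h \<and> g - L * h \<in> jac_ideal f))
         \<and> (\<forall>h. homog m h \<and> h \<notin> jac_ideal f \<longrightarrow> h * L \<notin> jac_ideal f)
         \<and> (\<forall>hs. quot_basis (jac_ideal f) m M hs \<longrightarrow>
                   quot_basis (jac_ideal f) (m + e) M (\<lambda>j. L * hs j))"
    using homog_mult[OF L_homog] mult_mem_iff mult_surj_mod[OF basis] quot_basis_mult
    by (simp add: mult.commute[of _ L]) blast
qed

end
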